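(* Let $\widehat K_5$ be the complete graph $K_5$ (vertices $w_1,\dots,w_5$) with a pendant vertex $v_i$ attached to each $w_i$, and let $S(\widehat K_5)$ be its full edge subdivision. Let $S(\widehat K_5)(A)$ and $S(\widehat K_5)(B)$ be obtained from $S(\widehat K_5)$ by identifying the (formerly pendant) degree-one vertices $v_1,\dots,v_5$ block-wise according to the $2$-partitions $A=\{2,3\}$ and $B=\{1,4\}$ of $5$ (blocks of sizes $2,3$, resp. $1,4$, each become one vertex; all edges kept). Then these two graphs, each with $22$ vertices, are non-isomorphic, and their standard Laplacians both have spectrum $$0,\ w_-,\ z_-^{(4)},\ \widehat w_-,\ 1^{(8)},\ \widehat w_+,\ z_+^{(4)},\ w_+,\ 2,$$ where $w_\pm=1\pm\frac12\sqrt{\frac{9+\sqrt{21}}{5}}$, $\widehat w_\pm=1\pm\frac12\sqrt{\frac{9-\sqrt{21}}{5}}$, $z_\pm=1\pm\sqrt{\frac25}$, and exponents $(m)$ denote multiplicities; in particular they are isospectral for the standard Laplacian (and, being bipartite, for the signless standard Laplacian).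
   Context: The edge subdivision of a graph $G$, denoted $S(G)$, replaces every edge $\{u,v\}$ by a new vertex $w$ and two edges $\{u,w\},\{w,v\}$. The standard Laplacian of a graph is $(\Delta_G f)(v)=f(v)-\frac{1}{\deg v}\sum_{u\in N_v}f(u)$ and the signless standard Laplacian is $(\Delta_{G^+}f)(v)=f(v)+\frac{1}{\deg v}\sum_{u\in N_v}f(u)$, where $N_v$ is the set of neighbours of $v$ and $\deg v=|N_v|$. *)

theory Defs
  imports Complex_Main "Jordan_Normal_Form.Char_Poly"
begin

(* A finite simple graph: a vertex set together with a set of edges, each edge a 2-element subset. *)
type_synonym 'a graph = "'a set \<times> 'a set set"

definition verts :: "'a graph \<Rightarrow> 'a set" where "verts G = fst G"
definition edges :: "'a graph \<Rightarrow> 'a set set" where "edges G = snd G"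

definition nbrs :: "'a graph \<Rightarrow> 'a \<Rightarrow> 'a set" where
  "nbrs G v = {u \<in> verts G. {u, v} \<in> edges G}"

definition deg :: "'a graph \<Rightarrow> 'a \<Rightarrow> nat" where
  "deg G v = card (nbrs G v)"

definition std_lap :: "'a graph \<Rightarrow> ('a \<Rightarrow> real) \<Rightarrow> 'a \<Rightarrow> real" where
  "std_lap G f v = f v - (1 / real (deg G v)) * (\<Sum>u\<in>nbrs G v. f u)"

definition signless_std_lap :: "'a graph \<Rightarrow> ('a \<Rightarrow> real) \<Rightarrow> 'a \<Rightarrow> real" where
  "signless_std_lap G f v = f v + (1 / real (deg G v)) * (\<Sum>u\<in>nbrs G v. f u)"

definition op_mat :: "(('a \<Rightarrow> real) \<Rightarrow> 'a \<Rightarrow> real) \<Rightarrow> 'a list \<Rightarrow> real mat" where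
  "op_mat T vs = mat (length vs) (length vs)
     (\<lambda>(i, j). T (\<lambda>u. if u = vs ! j then 1 else 0) (vs ! i))"

definition enumerates :: "'a graph \<Rightarrow> 'a list \<Rightarrow> bool" where
  "enumerates G vs \<longleftrightarrow> distinct vs \<and> set vs = verts G"

definition has_spectrum :: "real mat \<Rightarrow> real list \<Rightarrow> bool" where
  "has_spectrum M ls \<longleftrightarrow> char_poly M = (\<Prod>l\<leftarrow>ls. [:- l, 1:])"

definition graph_iso :: "'a graph \<Rightarrow> 'b graph \<Rightarrow> bool" where
  "graph_iso G H \<longleftrightarrow> (\<exists>f. bij_betw f (verts G) (verts H) \<and>
      (\<forall>x\<in>verts G. \<forall>y\<in>verts G. {x, y} \<in> edges G \<longleftrightarrow> {f x, f y} \<in> edges H))"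

definition subdivision :: "'a graph \<Rightarrow> ('a + 'a set) graph" where
  "subdivision G = (Inl ` verts G \<union> Inr ` edges G,
                    {{Inl u, Inr e} | u e. e \<in> edges G \<and> u \<in> e})"

definition identify :: "('a \<Rightarrow> 'b) \<Rightarrow> 'a graph \<Rightarrow> 'b graph" where
  "identify q G = (q ` verts G, (\<lambda>e. q ` e) ` edges G)"

(* K5 with a pendant vertex: W i = w_i, P i = v_i, i = 1..5 *)
datatype k5v = W nat | P nat

definition K5hat :: "k5v graph" where
  "K5hat = ({W i | i. i \<in> {1..5}} \<union> {P i | i. i \<in> {1..5}},
            {{W i, W j} | i j. i \<in> {1..5} \<and> j \<in> {1..5} \<and> i \<noteq> j}
            \<union> {{W i, P i} | i. i \<in> {1..5}})"

definition glue :: "nat set \<Rightarrow> k5v + k5v set \<Rightarrow> k5v + k5v set" where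
  "glue S x = (case x of Inl (P i) \<Rightarrow> Inl (P (if i \<in> S then 0 else 6)) | _ \<Rightarrow> x)"

definition SK5hat_glued :: "nat set \<Rightarrow> (k5v + k5v set) graph" where
  "SK5hat_glued S = identify (glue S) (subdivision K5hat)"

(* partition A = {2,3}: blocks {v1,v2}, {v3,v4,v5};  partition B = {1,4}: blocks {v1}, {v2,...,v5} *)
definition SK5hat_A :: "(k5v + k5v set) graph" where "SK5hat_A = SK5hat_glued {1, 2}"
definition SK5hat_B :: "(k5v + k5v set) graph" where "SK5hat_B = SK5hat_glued {1}"

definition w_minus :: real where "w_minus = 1 - (1/2) * sqrt ((9 + sqrt 21) / 5)"
definition w_plus :: real where "w_plus = 1 + (1/2) * sqrt ((9 + sqrt 21) / 5)"
definition wh_minus :: real where "wh_minus = 1 - (1/2) * sqrt ((9 - sqrt 21) / 5)"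
definition wh_plus :: real where "wh_plus = 1 + (1/2) * sqrt ((9 - sqrt 21) / 5)"
definition z_minus :: real where "z_minus = 1 - sqrt (2 / 5)"
definition z_plus :: real where "z_plus = 1 + sqrt (2 / 5)"

definition spec9 :: "real list" where
  "spec9 = [0, w_minus] @ replicate 4 z_minus @ [wh_minus] @ replicate 8 1
           @ [wh_plus] @ replicate 4 z_plus @ [w_plus, 2]"

end

theory Submission
  imports Defs
begin

(* The graph is bipartite, so its signless standard Laplacian is a block matrix [[I, B], [C, I]],
   where BC is the two-step random walk on the original vertices, and its characteristic polynomial
   is chi_BC((x - 1)^2) (x - 1)^8.  The standard Laplacian [[I, -B], [-C, I]] is conjugate to it by
   diag(I, -I).  For both gluings BC is similar, via an explicit rational change of basis, to the
   same matrix, with characteristic polynomial (t^2 - 9t/10 + 3/20)(t - 1)(t - 2/5)^4; substituting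
   t = (x - 1)^2 gives the stated spectrum.  The graphs are not isomorphic: after the gluing B the
   vertex v1 still has degree one, whereas every vertex of the graph glued along A has degree at
   least two. *)

section \<open>Block matrices\<close>

lemma det_2x2:
  fixes A :: "'a::comm_ring_1 mat"
  assumes A: "A \<in> carrier_mat 2 2"
  shows "det A = A $$ (0,0) * A $$ (1,1) - A $$ (1,0) * A $$ (0,1)"
proof -
  have "det A = (\<Sum>i<2. A $$ (i,0) * cofactor A i 0)"
    by (rule laplace_expansion_column[OF A], simp)
  also have "\<dots> = A $$ (0,0) * cofactor A 0 0 + A $$ (1,0) * cofactor A 1 0"
    by (simp add: numeral_2_eq_2)
  moreover have "cofactor A 0 0 = A $$ (1,1)" and "cofactor A 1 0 = - A $$ (0,1)"
    using A by (simp_all add: cofactor_def det_single mat_delete_def insert_index_def)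
  ultimately show ?thesis by simp
qed

lemma mat_of_rows_list_carrier: "length rs = n \<Longrightarrow> mat_of_rows_list m rs \<in> carrier_mat n m"
  by (simp add: mat_of_rows_list_def)

lemma four_block_mat_of_rows_list:
  assumes "length A = length B" "length C = length D"
    "\<forall>r\<in>set A. length r = c1" "\<forall>r\<in>set C. length r = c1"
    "\<forall>r\<in>set B. length r = c2" "\<forall>r\<in>set D. length r = c2"
  shows "four_block_mat (mat_of_rows_list c1 A) (mat_of_rows_list c2 B)
           (mat_of_rows_list c1 C) (mat_of_rows_list c2 D)
    = mat_of_rows_list (c1 + c2) (map2 (@) A B @ map2 (@) C D)"
  by (rule eq_matI, insert assms, auto simp: mat_of_rows_list_def nth_append)

lemma zero_mat_as_rows: "0\<^sub>m r c = mat_of_rows_list c (replicate r (replicate c 0))"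
  by (rule eq_matI, auto simp: mat_of_rows_list_def)

lemma one_mat_as_rows:
  "1\<^sub>m n = mat_of_rows_list n (map (\<lambda>i. map (\<lambda>j. if i = j then 1 else 0) [0..<n]) [0..<n])"
  by (rule eq_matI, auto simp: mat_of_rows_list_def)

definition rows_mult :: "nat \<Rightarrow> 'a::comm_semiring_1 list list \<Rightarrow> 'a list list \<Rightarrow> 'a list list" where
  "rows_mult nc xs ys = map (\<lambda>r. map (\<lambda>j. sum_list (map2 (*) r (map (\<lambda>y. y ! j) ys))) [0..<nc]) xs"

lemma sum_list_map2_nth:
  "length r = length ys \<Longrightarrow>
   sum_list (map2 (*) r (map (\<lambda>y. y ! j) ys)) = (\<Sum>l<length ys. r ! l * ys ! l ! j)"
proof (induction r arbitrary: ys)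
  case (Cons a r)
  then obtain y ys' where "ys = y # ys'" by (cases ys) auto
  with Cons show ?case by (simp del: sum.lessThan_Suc add: sum.lessThan_Suc_shift)
qed simp

lemma mat_of_rows_list_mult:
  assumes "n = length ys" "\<forall>r\<in>set xs. length r = n" "\<forall>r\<in>set ys. length r = nc"
  shows "mat_of_rows_list n xs * mat_of_rows_list nc ys = mat_of_rows_list nc (rows_mult nc xs ys)"
proof (rule eq_matI)
  fix i j assume "i < dim_row (mat_of_rows_list nc (rows_mult nc xs ys))"
    and "j < dim_col (mat_of_rows_list nc (rows_mult nc xs ys))"
  then have i: "i < length xs" and j: "j < nc" by (auto simp: mat_of_rows_list_def rows_mult_def)
  have "(mat_of_rows_list n xs * mat_of_rows_list nc ys) $$ (i, j)
     = (\<Sum>l<length ys. xs ! i ! l * ys ! l ! j)"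
    using i j assms by (auto simp: mat_of_rows_list_def scalar_prod_def intro!: sum.cong)
  also have "\<dots> = mat_of_rows_list nc (rows_mult nc xs ys) $$ (i, j)"
    using i j assms by (simp add: mat_of_rows_list_def rows_mult_def sum_list_map2_nth)
  finally show "(mat_of_rows_list n xs * mat_of_rows_list nc ys) $$ (i, j) =
      mat_of_rows_list nc (rows_mult nc xs ys) $$ (i, j)" .
qed (use assms in \<open>auto simp: mat_of_rows_list_def rows_mult_def\<close>)

lemma char_poly_four_block_lower_zero:
  fixes A1 :: "'a::idom mat"
  assumes A1: "A1 \<in> carrier_mat n n" and A2: "A2 \<in> carrier_mat n m" and A3: "A3 \<in> carrier_mat m m"
  shows "char_poly (four_block_mat A1 A2 (0\<^sub>m m n) A3) = char_poly A1 * char_poly A3"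
proof -
  let ?cm = "\<lambda>A. [:0, 1:] \<cdot>\<^sub>m 1\<^sub>m (dim_row A) + map_mat (\<lambda>a. [:- a:]) A"
  have "?cm (four_block_mat A1 A2 (0\<^sub>m m n) A3)
      = four_block_mat (?cm A1) (map_mat (\<lambda>a. [:- a:]) A2) (0\<^sub>m m n) (?cm A3)"
    by (rule eq_matI, insert A1 A2 A3, auto)
  moreover have "det \<dots> = det (?cm A1) * det (?cm A3)"
    by (rule det_four_block_mat_lower_left_zero[OF _ _ refl], insert A1 A2 A3, auto)
  ultimately show ?thesis unfolding char_poly_defs using A1 A3 by simp
qed

lemma det_four_block_scalar:
  fixes y :: "'a::idom"
  assumes B: "B \<in> carrier_mat n m" and C: "C \<in> carrier_mat m n"
  shows "det (four_block_mat (y \<cdot>\<^sub>m 1\<^sub>m n) B C (y \<cdot>\<^sub>m 1\<^sub>m m)) * y ^ n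
       = det ((y * y) \<cdot>\<^sub>m 1\<^sub>m n - B * C) * y ^ m"
proof -
  let ?M = "four_block_mat (y \<cdot>\<^sub>m 1\<^sub>m n) B C (y \<cdot>\<^sub>m 1\<^sub>m m)"
  let ?N = "four_block_mat (y \<cdot>\<^sub>m 1\<^sub>m n) (0\<^sub>m n m) (- C) (1\<^sub>m m)"
  have "?M * ?N = four_block_mat
      (y \<cdot>\<^sub>m 1\<^sub>m n * (y \<cdot>\<^sub>m 1\<^sub>m n) + B * - C) (y \<cdot>\<^sub>m 1\<^sub>m n * 0\<^sub>m n m + B * 1\<^sub>m m)
      (C * (y \<cdot>\<^sub>m 1\<^sub>m n) + y \<cdot>\<^sub>m 1\<^sub>m m * - C) (C * 0\<^sub>m n m + y \<cdot>\<^sub>m 1\<^sub>m m * 1\<^sub>m m)"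
    by (rule mult_four_block_mat, insert B C, auto)
  also have "\<dots> = four_block_mat ((y * y) \<cdot>\<^sub>m 1\<^sub>m n - B * C) B (0\<^sub>m m n) (y \<cdot>\<^sub>m 1\<^sub>m m)"
    by (rule cong_four_block_mat; rule eq_matI, insert B C, auto simp: minus_add_uminus_mat)
  finally have MN: "?M * ?N = \<dots>" .
  have "det ?M * det ?N = det (?M * ?N)"
    by (rule det_mult[symmetric], insert B C, auto)
  also have "\<dots> = det ((y * y) \<cdot>\<^sub>m 1\<^sub>m n - B * C) * det (y \<cdot>\<^sub>m 1\<^sub>m m)"
    unfolding MN by (rule det_four_block_mat_lower_left_zero, insert B C, auto)
  moreover have "det ?N = det (y \<cdot>\<^sub>m 1\<^sub>m n) * det (1\<^sub>m m :: 'a mat)"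
    by (rule det_four_block_mat_upper_right_zero, insert B C, auto)
  ultimately show ?thesis by (simp add: det_smult)
qed

lemma char_poly_four_block_one:
  fixes B :: "'a::idom mat"
  assumes B: "B \<in> carrier_mat n m" and C: "C \<in> carrier_mat m n" and k: "m = n + k"
  shows "char_poly (four_block_mat (1\<^sub>m n) B C (1\<^sub>m m))
     = char_poly (B * C) \<circ>\<^sub>p [:-1, 1:]^2 * [:-1, 1:]^k"
proof -
  let ?y = "[:-1, 1:] :: 'a poly"
  let ?const = "map_mat (\<lambda>a. [:a:])"
  have "char_poly_matrix (four_block_mat (1\<^sub>m n) B C (1\<^sub>m m))
     = four_block_mat (?y \<cdot>\<^sub>m 1\<^sub>m n) (?const (- B)) (?const (- C)) (?y \<cdot>\<^sub>m 1\<^sub>m m)"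
    unfolding char_poly_matrix_def by (rule eq_matI, insert B C, auto simp: one_pCons)
  moreover have "?const (- B) * ?const (- C) = ?const (B * C)"
    using map_poly_mult[of "- B" n m "- C" n, symmetric] B C by simp
  moreover have "det ((?y * ?y) \<cdot>\<^sub>m 1\<^sub>m n - ?const (B * C)) = char_poly (B * C) \<circ>\<^sub>p ?y^2"
  proof -
    have "map_mat (\<lambda>p. p \<circ>\<^sub>p ?y^2) (char_poly_matrix (B * C))
        = (?y * ?y) \<cdot>\<^sub>m 1\<^sub>m n - ?const (B * C)"
      unfolding char_poly_matrix_def
      by (rule eq_matI, insert B C, auto simp: pcompose_pCons power2_eq_square)
    then show ?thesis unfolding char_poly_def
      using comm_ring_hom.hom_det[OF pcompose_hom.comm_ring_hom_axioms] by metis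
  qed
  ultimately have "char_poly (four_block_mat (1\<^sub>m n) B C (1\<^sub>m m)) * ?y ^ n
      = (char_poly (B * C) \<circ>\<^sub>p ?y^2 * ?y ^ k) * ?y ^ n"
    using det_four_block_scalar[of "?const (- B)" n m "?const (- C)" ?y] B C
    unfolding char_poly_def by (simp add: k power_add ac_simps)
  then show ?thesis by simp
qed

lemma char_poly_four_block_one_uminus:
  fixes B :: "'a::comm_ring_1 mat"
  assumes B: "B \<in> carrier_mat n m" and C: "C \<in> carrier_mat m n"
  shows "char_poly (four_block_mat (1\<^sub>m n) (- B) (- C) (1\<^sub>m m))
       = char_poly (four_block_mat (1\<^sub>m n) B C (1\<^sub>m m))"
proof -
  let ?D = "four_block_mat (1\<^sub>m n) (0\<^sub>m n m) (0\<^sub>m m n) (- 1\<^sub>m m) :: 'a mat"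
  have "?D * ?D = four_block_mat (1\<^sub>m n) (0\<^sub>m n m) (0\<^sub>m m n) (1\<^sub>m m)"
    by (subst mult_four_block_mat, auto intro!: cong_four_block_mat eq_matI)
  then have DD: "?D * ?D = 1\<^sub>m (n + m)" by simp
  have "?D * four_block_mat (1\<^sub>m n) B C (1\<^sub>m m) = four_block_mat (1\<^sub>m n) B (- C) (- 1\<^sub>m m)"
    using B C by (subst mult_four_block_mat, auto intro!: cong_four_block_mat)
  moreover have "four_block_mat (1\<^sub>m n) B (- C) (- 1\<^sub>m m) * ?D
      = four_block_mat (1\<^sub>m n) (- B) (- C) (1\<^sub>m m)"
    using B C by (subst mult_four_block_mat, auto intro!: cong_four_block_mat)
  ultimately have conj: "four_block_mat (1\<^sub>m n) (- B) (- C) (1\<^sub>m m)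
      = ?D * four_block_mat (1\<^sub>m n) B C (1\<^sub>m m) * ?D" by simp
  have "similar_mat (four_block_mat (1\<^sub>m n) (- B) (- C) (1\<^sub>m m)) (four_block_mat (1\<^sub>m n) B C (1\<^sub>m m))"
    by (rule similar_matI[OF _ DD DD conj], insert B C, auto)
  then show ?thesis by (rule char_poly_similar)
qed

lemma char_poly_eq_if_intertwined:
  fixes A :: "'a::field mat"
  assumes A: "A \<in> carrier_mat n n" and T: "T \<in> carrier_mat n n"
    and S: "S \<in> carrier_mat n n" and S': "S' \<in> carrier_mat n n"
    and AS: "A * S = S * T" and S'S: "S' * S = 1\<^sub>m n"
  shows "char_poly A = char_poly T"
proof -
  have SS': "S * S' = 1\<^sub>m n" by (rule mat_mult_left_right_inverse[OF S' S S'S])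
  have "A = A * (S * S')" using A SS' by simp
  also have "\<dots> = S * T * S'" using A S S' by (simp add: AS assoc_mult_mat[symmetric])
  finally have "A = S * T * S'" .
  then have "similar_mat A T" by (intro similar_matI[OF _ SS' S'S], insert A T S S', auto)
  then show ?thesis by (rule char_poly_similar)
qed

lemma char_poly_reindex:
  fixes A :: "'a::field mat"
  assumes A: "A \<in> carrier_mat n n" and p: "p ` {..<n} \<subseteq> {..<n}" "inj_on p {..<n}"
  shows "char_poly (mat n n (\<lambda>(i, j). A $$ (p i, p j))) = char_poly A"
proof -
  define S :: "'a mat" where "S = mat n n (\<lambda>(i, j). of_bool (j = p i))"
  define S' :: "'a mat" where "S' = mat n n (\<lambda>(i, j). of_bool (i = p j))"
  have carrier: "S \<in> carrier_mat n n" "S' \<in> carrier_mat n n" unfolding S_def S'_def by auto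
  have S_mult: "(S * X) $$ (i, j) = X $$ (p i, j)"
    if "X \<in> carrier_mat n k" "i < n" "j < k" for X :: "'a mat" and k i j
  proof -
    have "{0..<n} \<inter> {l. l = p i} = {p i}" using that p by auto
    then show ?thesis using that by (simp add: S_def scalar_prod_def)
  qed
  have mult_S': "(X * S') $$ (i, j) = X $$ (i, p j)"
    if "X \<in> carrier_mat k n" "i < k" "j < n" for X :: "'a mat" and k i j
  proof -
    have "{0..<n} \<inter> {l. l = p j} = {p j}" using that p by auto
    then show ?thesis using that by (simp add: S'_def scalar_prod_def)
  qed
  have SS': "S * S' = 1\<^sub>m n"
  proof (rule eq_matI)
    fix i j assume "i < dim_row (1\<^sub>m n :: 'a mat)" "j < dim_col (1\<^sub>m n :: 'a mat)"
    then have i: "i < n" and j: "j < n" by auto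
    have "(S * S') $$ (i, j) = S' $$ (p i, j)" by (rule S_mult[OF carrier(2) i j])
    also have "\<dots> = 1\<^sub>m n $$ (i, j)" using i j p by (auto simp: S'_def inj_on_eq_iff)
    finally show "(S * S') $$ (i, j) = 1\<^sub>m n $$ (i, j)" .
  qed (use carrier in auto)
  have S'S: "S' * S = 1\<^sub>m n" by (rule mat_mult_left_right_inverse[OF carrier SS'])
  have conj: "mat n n (\<lambda>(i, j). A $$ (p i, p j)) = S * A * S'"
  proof (rule eq_matI)
    fix i j assume "i < dim_row (S * A * S')" "j < dim_col (S * A * S')"
    then have i: "i < n" and j: "j < n" using carrier by auto
    have SA: "S * A \<in> carrier_mat n n" using A carrier by auto
    have "(S * A * S') $$ (i, j) = (S * A) $$ (i, p j)" by (rule mult_S'[OF SA i j])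
    also have "\<dots> = A $$ (p i, p j)" by (rule S_mult[OF A i], use j p in auto)
    finally show "mat n n (\<lambda>(i, j). A $$ (p i, p j)) $$ (i, j) = (S * A * S') $$ (i, j)"
      using i j by simp
  qed (use carrier in auto)
  have "similar_mat (mat n n (\<lambda>(i, j). A $$ (p i, p j))) A"
    by (rule similar_matI[OF _ SS' S'S conj], insert A carrier, auto)
  then show ?thesis by (rule char_poly_similar)
qed

section \<open>Laplacians of finite graphs\<close>

lemma nbrs_eq_filter:
  assumes "verts G = set vs" and "\<forall>x\<in>set vs. \<forall>y\<in>set vs. {x, y} \<in> edges G \<longleftrightarrow> R x y"
    and "v \<in> set vs"
  shows "nbrs G v = set (filter (\<lambda>u. R u v) vs)"
  using assms unfolding nbrs_def by auto

lemma deg_eq_length_filter: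
  assumes "verts G = set vs" and "distinct vs"
    and "\<forall>x\<in>set vs. \<forall>y\<in>set vs. {x, y} \<in> edges G \<longleftrightarrow> R x y" and "v \<in> set vs"
  shows "deg G v = length (filter (\<lambda>u. R u v) vs)"
  unfolding deg_def nbrs_eq_filter[OF assms(1,3,4)] by (rule distinct_card) (simp add: assms(2))

lemma deg_graph_iso:
  assumes bij: "bij_betw f (verts G) (verts H)"
    and E: "\<forall>x\<in>verts G. \<forall>y\<in>verts G. {x, y} \<in> edges G \<longleftrightarrow> {f x, f y} \<in> edges H"
    and x: "x \<in> verts G"
  shows "deg H (f x) = deg G x"
proof -
  have "nbrs H (f x) = f ` nbrs G x"
  proof
    show "f ` nbrs G x \<subseteq> nbrs H (f x)"
      using E x bij unfolding nbrs_def bij_betw_def by auto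
    show "nbrs H (f x) \<subseteq> f ` nbrs G x"
    proof
      fix w assume w: "w \<in> nbrs H (f x)"
      then obtain u where u: "u \<in> verts G" "w = f u"
        using bij unfolding nbrs_def bij_betw_def by auto
      then show "w \<in> f ` nbrs G x" using E x w unfolding nbrs_def by auto
    qed
  qed
  moreover have "inj_on f (nbrs G x)"
    using bij unfolding bij_betw_def nbrs_def by (rule inj_on_subset[OF conjunct1]) auto
  ultimately show ?thesis unfolding deg_def by (simp add: card_image)
qed

lemma op_mat_signless_std_lap_as_rows:
  assumes V: "verts G = set vs" and D: "distinct vs"
    and adj: "\<forall>x\<in>set vs. \<forall>y\<in>set vs. {x, y} \<in> edges G \<longleftrightarrow> R x y"
  shows "op_mat (signless_std_lap G) vs = mat_of_rows_list (length vs)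
     (map (\<lambda>v. map (\<lambda>x. (if x = v then 1 else 0)
        + (if R x v then 1 / real (length (filter (\<lambda>u. R u v) vs)) else 0)) vs) vs)"
proof -
  have "(\<Sum>u\<in>nbrs G v. if u = x then 1 else 0) = (if R x v then 1 else (0::real))"
    if "v \<in> set vs" "x \<in> set vs" for v x
    using that by (simp add: nbrs_eq_filter[OF V adj] sum.delta')
  then show ?thesis unfolding op_mat_def mat_of_rows_list_def
    by (intro eq_matI) (auto simp: signless_std_lap_def deg_eq_length_filter[OF V D adj])
qed

lemma op_mat_std_lap_eq_diff_signless:
  assumes "distinct vs"
  shows "op_mat (std_lap G) vs = 2 \<cdot>\<^sub>m 1\<^sub>m (length vs) - op_mat (signless_std_lap G) vs"
  using assms by (intro eq_matI)
    (auto simp: op_mat_def std_lap_def signless_std_lap_def nth_eq_iff_index_eq)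

lemma char_poly_std_lap_eq_signless:
  assumes D: "distinct vs" and len: "length vs = n + m"
    and B: "B \<in> carrier_mat n m" and C: "C \<in> carrier_mat m n"
    and blocks: "op_mat (signless_std_lap G) vs = four_block_mat (1\<^sub>m n) B C (1\<^sub>m m)"
  shows "char_poly (op_mat (std_lap G) vs) = char_poly (op_mat (signless_std_lap G) vs)"
proof -
  have "op_mat (std_lap G) vs = four_block_mat (1\<^sub>m n) (- B) (- C) (1\<^sub>m m)"
    unfolding op_mat_std_lap_eq_diff_signless[OF D] blocks len
    by (rule eq_matI) (use B C in auto)
  then show ?thesis unfolding blocks by (simp add: char_poly_four_block_one_uminus[OF B C])
qed

lemma char_poly_op_mat_enumerates:
  assumes vs: "enumerates G vs" and ws: "enumerates G ws"
  shows "char_poly (op_mat T vs) = char_poly (op_mat T ws)"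
proof -
  define n where "n = length ws"
  have D: "distinct vs" "distinct ws" and S: "set vs = set ws"
    using vs ws unfolding enumerates_def by auto
  then have len: "length vs = n" unfolding n_def by (metis distinct_card)
  have "\<forall>i. \<exists>j. i < n \<longrightarrow> j < n \<and> ws ! j = vs ! i"
    using S len unfolding n_def by (metis in_set_conv_nth nth_mem)
  then obtain p where p: "\<And>i. i < n \<Longrightarrow> p i < n \<and> ws ! p i = vs ! i" by metis
  have inj: "inj_on p {..<n}"
    using p D(1) len by (intro inj_onI) (metis lessThan_iff nth_eq_iff_index_eq)
  have "op_mat T vs = mat n n (\<lambda>(i, j). op_mat T ws $$ (p i, p j))"
    using p len unfolding op_mat_def n_def by (intro eq_matI) auto
  also have "char_poly \<dots> = char_poly (op_mat T ws)"
    using p inj by (intro char_poly_reindex) (auto simp: op_mat_def n_def)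
  finally show ?thesis .
qed

section \<open>The characteristic polynomial of the spectrum\<close>

lemma pcompose_shifted_square:
  "[:- (r^2), 1:] \<circ>\<^sub>p [:-1, 1:]^2 = [:- (1 - r), 1:] * [:- (1 + r), 1::'a::comm_ring_1:]"
  by (simp add: pcompose_pCons algebra_simps power2_eq_square)

definition normal_form_block :: "real mat" where
  "normal_form_block = mat_of_rows_list 2 [[2/5,1/10],[1/2,1/2]]"

(* Eigenvalues are written as squares r^2, with r = w_plus - 1, wh_plus - 1, 1, z_plus - 1, so that
   pcompose_shifted_square turns them into the pairs 1 - r, 1 + r of the spectrum. *)

lemma char_poly_normal_form_block:
  "char_poly normal_form_block
     = [:- (((1/2) * sqrt ((9 + sqrt 21) / 5))^2), 1:] * [:- (((1/2) * sqrt ((9 - sqrt 21) / 5))^2), 1:]"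
proof -
  have "sqrt (21::real) \<le> 9" using real_sqrt_le_mono[of 21 81] by simp
  then have sq: "((1/2) * sqrt ((9 + sqrt 21) / 5))^2 = (9 + sqrt 21) / 20"
    "((1/2) * sqrt ((9 - sqrt 21) / 5))^2 = (9 - sqrt 21) / (20::real)"
    by (simp_all add: power_mult_distrib power_divide)
  have "(9 + sqrt 21) / 20 * ((9 - sqrt 21) / 20) = (81 - (sqrt 21)^2) / (400::real)"
    by (simp add: algebra_simps power2_eq_square)
  then have prod: "(9 + sqrt 21) / 20 * ((9 - sqrt 21) / 20) = (3/20::real)" by simp
  have cm: "char_poly_matrix normal_form_block \<in> carrier_mat 2 2"
    by (simp add: normal_form_block_def mat_of_rows_list_carrier)
  have "char_poly normal_form_block = [:3/20, -9/10, 1:]"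
    unfolding char_poly_def det_2x2[OF cm]
    by (simp add: normal_form_block_def char_poly_matrix_def mat_of_rows_list_def one_pCons)
  also have "\<dots> = [:- ((9 + sqrt 21) / 20), 1:] * [:- ((9 - sqrt 21) / 20), 1:]"
    using prod by (simp add: field_simps)
  finally show ?thesis unfolding sq .
qed

definition normal_form_diag :: "real mat" where
  "normal_form_diag = mat_of_rows_list 5
     [[1,0,0,0,0],[0,2/5,0,0,0],[0,0,2/5,0,0],[0,0,0,2/5,0],[0,0,0,0,2/5]]"

definition two_step_normal_form :: "real mat" where
  "two_step_normal_form = mat_of_rows_list 7
     [[2/5,1/10,0,0,0,0,0],
      [1/2,1/2,0,0,0,0,0],
      [0,0,1,0,0,0,0],
      [0,0,0,2/5,0,0,0],
      [0,0,0,0,2/5,0,0],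
      [0,0,0,0,0,2/5,0],
      [0,0,0,0,0,0,2/5]]"

lemma two_step_normal_form_blocks:
  "two_step_normal_form = four_block_mat normal_form_block (0\<^sub>m 2 5) (0\<^sub>m 5 2) normal_form_diag"
  unfolding two_step_normal_form_def normal_form_block_def normal_form_diag_def zero_mat_as_rows
  by (subst four_block_mat_of_rows_list, auto simp: numeral_eq_Suc)

lemma char_poly_normal_form_diag:
  "char_poly normal_form_diag = [:- (1^2), 1:] * [:- (sqrt (2/5)^2), 1:]^4"
proof -
  have carrier: "normal_form_diag \<in> carrier_mat 5 5"
    by (simp add: normal_form_diag_def mat_of_rows_list_carrier)
  have "upper_triangular normal_form_diag"
    unfolding normal_form_diag_def upper_triangular_def
    by (auto simp: mat_of_rows_list_def less_Suc_eq numeral_eq_Suc)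
  then have "char_poly normal_form_diag = (\<Prod>a\<leftarrow>diag_mat normal_form_diag. [:- a, 1:])"
    by (rule char_poly_upper_triangular[OF carrier])
  also have "diag_mat normal_form_diag = [1,2/5,2/5,2/5,2/5]"
    unfolding normal_form_diag_def diag_mat_def by (simp add: mat_of_rows_list_def upt_rec)
  finally show ?thesis by (simp add: power4_eq_xxxx)
qed

lemma char_poly_two_step_normal_form_spec9:
  "char_poly two_step_normal_form \<circ>\<^sub>p [:-1, 1:]^2 * [:-1, 1:]^8 = (\<Prod>l\<leftarrow>spec9. [:- l, 1:])"
proof -
  have "char_poly two_step_normal_form = char_poly normal_form_block * char_poly normal_form_diag"
    unfolding two_step_normal_form_blocks
    by (rule char_poly_four_block_lower_zero)
      (simp_all add: normal_form_block_def normal_form_diag_def mat_of_rows_list_carrier)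
  then have composed: "char_poly two_step_normal_form \<circ>\<^sub>p [:-1, 1:]^2
    = [:- w_minus, 1:] * [:- w_plus, 1:] * ([:- wh_minus, 1:] * [:- wh_plus, 1:])
      * ([:- 0, 1:] * [:- 2, 1:] * ([:- z_minus, 1:] * [:- z_plus, 1:])^4)"
    unfolding char_poly_normal_form_block char_poly_normal_form_diag
      w_minus_def w_plus_def wh_minus_def wh_plus_def z_minus_def z_plus_def
    by (simp only: pcompose_hom.hom_mult pcompose_hom.hom_power pcompose_shifted_square) simp
  show ?thesis
    unfolding composed spec9_def
    by (simp only: map_append list.map map_replicate prod_list.append prod_list_replicate
        prod_list.Cons prod_list.Nil mult_1_right power_mult_distrib ac_simps)
qed

section \<open>The glued subdivisions of K5 with pendant vertices\<close>

definition glue_vertex :: "nat set \<Rightarrow> k5v \<Rightarrow> k5v" where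
  "glue_vertex S a = (case a of P i \<Rightarrow> P (if i \<in> S then 0 else 6) | W i \<Rightarrow> W i)"

lemma glue_vertex_simps [simp]:
  "glue_vertex S (W i) = W i" "glue_vertex S (P i) = P (if i \<in> S then 0 else 6)"
  by (simp_all add: glue_vertex_def)

lemma glue_Inl [simp]: "glue S (Inl a) = Inl (glue_vertex S a)"
  by (cases a) (simp_all add: glue_def)

lemma glue_Inr [simp]: "glue S (Inr e) = Inr e"
  by (simp add: glue_def)

definition K5hat_vertex_list :: "k5v list" where
  "K5hat_vertex_list = [W 1, W 2, W 3, W 4, W 5, P 1, P 2, P 3, P 4, P 5]"

definition K5hat_edge_list :: "k5v set list" where
  "K5hat_edge_list =
     [{W 1, W 2}, {W 1, W 3}, {W 1, W 4}, {W 1, W 5}, {W 2, W 3},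
      {W 2, W 4}, {W 2, W 5}, {W 3, W 4}, {W 3, W 5}, {W 4, W 5},
      {W 1, P 1}, {W 2, P 2}, {W 3, P 3}, {W 4, P 4}, {W 5, P 5}]"

lemma one_to_five: "(i::nat) \<in> {1..5} \<longleftrightarrow> i = 1 \<or> i = 2 \<or> i = 3 \<or> i = 4 \<or> i = 5"
  by auto

lemma verts_K5hat: "verts K5hat = set K5hat_vertex_list"
  unfolding K5hat_def verts_def K5hat_vertex_list_def by (auto simp: one_to_five)

lemma edges_K5hat: "edges K5hat = set K5hat_edge_list"
proof
  have WW: "{W i, W j} \<in> edges K5hat" if "i \<in> {1..5}" "j \<in> {1..5}" "i \<noteq> j" for i j
    using that unfolding K5hat_def edges_def by auto
  have WP: "{W i, P i} \<in> edges K5hat" if "i \<in> {1..5}" for i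
    using that unfolding K5hat_def edges_def by auto
  show "set K5hat_edge_list \<subseteq> edges K5hat"
    unfolding K5hat_edge_list_def by (simp add: WW WP)
next
  have WW: "{W i, W j} \<in> set K5hat_edge_list" if "i < j" "i \<in> {1..5}" "j \<in> {1..5}" for i j
    using that unfolding one_to_five K5hat_edge_list_def by (elim disjE) simp_all
  have WP: "{W i, P i} \<in> set K5hat_edge_list" if "i \<in> {1..5}" for i
    using that unfolding one_to_five K5hat_edge_list_def by (elim disjE) simp_all
  show "edges K5hat \<subseteq> set K5hat_edge_list"
  proof
    fix e assume "e \<in> edges K5hat"
    then consider i j where "e = {W i, W j}" "i \<in> {1..5}" "j \<in> {1..5}" "i < j \<or> j < i"
      | i where "e = {W i, P i}" "i \<in> {1..5}"
      unfolding K5hat_def edges_def by (auto simp: neq_iff)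
    then show "e \<in> set K5hat_edge_list"
    proof cases
      case (1 i j)
      then show ?thesis using WW[of i j] WW[of j i] by (metis insert_commute)
    qed (simp add: WP)
  qed
qed

definition glued_vertex_list :: "(k5v + k5v set) list" where
  "glued_vertex_list = [Inl (W 1), Inl (W 2), Inl (W 3), Inl (W 4), Inl (W 5), Inl (P 0), Inl (P 6)]
     @ map Inr K5hat_edge_list"

lemma distinct_glued_vertex_list: "distinct glued_vertex_list"
  unfolding glued_vertex_list_def K5hat_edge_list_def by (simp add: doubleton_eq_iff)

lemma length_glued_vertex_list: "length glued_vertex_list = 22"
  unfolding glued_vertex_list_def K5hat_edge_list_def by simp

lemma set_eq_if_list_all:
  "list_all (\<lambda>x. x \<in> set ys) xs \<Longrightarrow> list_all (\<lambda>x. x \<in> set xs) ys \<Longrightarrow> set xs = set ys"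
  by (auto simp: list_all_iff)

lemma verts_SK5hat_glued:
  "verts (SK5hat_glued S) = set (map (glue S) (map Inl K5hat_vertex_list @ map Inr K5hat_edge_list))"
  using verts_K5hat edges_K5hat
  unfolding SK5hat_glued_def identify_def subdivision_def verts_def edges_def
  by (simp add: image_Un image_image)

lemma verts_SK5hat_A: "verts SK5hat_A = set glued_vertex_list"
  unfolding SK5hat_A_def verts_SK5hat_glued
  by (rule set_eq_if_list_all)
    (simp_all add: K5hat_vertex_list_def K5hat_edge_list_def glued_vertex_list_def)

lemma verts_SK5hat_B: "verts SK5hat_B = set glued_vertex_list"
  unfolding SK5hat_B_def verts_SK5hat_glued
  by (rule set_eq_if_list_all)
    (simp_all add: K5hat_vertex_list_def K5hat_edge_list_def glued_vertex_list_def)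

lemma enumerates_SK5hat_A: "enumerates SK5hat_A glued_vertex_list"
  unfolding enumerates_def by (simp add: distinct_glued_vertex_list verts_SK5hat_A)

lemma enumerates_SK5hat_B: "enumerates SK5hat_B glued_vertex_list"
  unfolding enumerates_def by (simp add: distinct_glued_vertex_list verts_SK5hat_B)

definition glued_adj :: "nat set \<Rightarrow> k5v + k5v set \<Rightarrow> k5v + k5v set \<Rightarrow> bool" where
  "glued_adj S x y = (case (x, y) of
      (Inl a, Inr e) \<Rightarrow> a \<in> glue_vertex S ` e
    | (Inr e, Inl a) \<Rightarrow> a \<in> glue_vertex S ` e
    | _ \<Rightarrow> False)"

lemma glued_adj_simps [simp]:
  "glued_adj S (Inl a) (Inr e) = (a \<in> glue_vertex S ` e)"
  "glued_adj S (Inr e) (Inl a) = (a \<in> glue_vertex S ` e)"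
  "glued_adj S (Inl a) (Inl b) = False" "glued_adj S (Inr e) (Inr f) = False"
  by (simp_all add: glued_adj_def)

lemma edges_SK5hat_glued:
  "edges (SK5hat_glued S) = {{Inl (glue_vertex S u), Inr e} | u e. e \<in> edges K5hat \<and> u \<in> e}"
proof -
  have "edges (SK5hat_glued S)
      = (\<lambda>e. glue S ` e) ` {{Inl u, Inr e} | u e. e \<in> edges K5hat \<and> u \<in> e}"
    unfolding SK5hat_glued_def identify_def subdivision_def by (simp add: edges_def verts_def)
  also have "\<dots> = {glue S ` {Inl u, Inr e} | u e. e \<in> edges K5hat \<and> u \<in> e}"
    by blast
  finally show ?thesis by simp
qed

lemma edge_in_verts_SK5hat_glued: "Inr e \<in> verts (SK5hat_glued S) \<Longrightarrow> e \<in> edges K5hat"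
  unfolding SK5hat_glued_def identify_def subdivision_def verts_def
  by (auto simp: edges_def verts_def glue_def split: sum.splits k5v.splits)

lemma edge_SK5hat_glued_iff:
  assumes x: "x \<in> verts (SK5hat_glued S)" and y: "y \<in> verts (SK5hat_glued S)"
  shows "{x, y} \<in> edges (SK5hat_glued S) \<longleftrightarrow> glued_adj S x y"
proof
  assume "{x, y} \<in> edges (SK5hat_glued S)"
  then obtain u e where "u \<in> e" "{x, y} = {Inl (glue_vertex S u), Inr e}"
    unfolding edges_SK5hat_glued by blast
  then show "glued_adj S x y" by (auto simp: doubleton_eq_iff)
next
  have edge: "{Inl a, Inr e} \<in> edges (SK5hat_glued S)"
    if "a \<in> glue_vertex S ` e" "Inr e \<in> verts (SK5hat_glued S)" for a e
    using that edge_in_verts_SK5hat_glued unfolding edges_SK5hat_glued by blast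
  assume "glued_adj S x y"
  then show "{x, y} \<in> edges (SK5hat_glued S)"
    using x y edge by (cases x; cases y) (auto simp: insert_commute)
qed

lemma adj_SK5hat_A:
  "\<forall>x\<in>set glued_vertex_list. \<forall>y\<in>set glued_vertex_list.
     {x, y} \<in> edges SK5hat_A \<longleftrightarrow> glued_adj {1, 2} x y"
  using edge_SK5hat_glued_iff[of _ "{1, 2}"] verts_SK5hat_A unfolding SK5hat_A_def by auto

lemma adj_SK5hat_B:
  "\<forall>x\<in>set glued_vertex_list. \<forall>y\<in>set glued_vertex_list.
     {x, y} \<in> edges SK5hat_B \<longleftrightarrow> glued_adj {1} x y"
  using edge_SK5hat_glued_iff[of _ "{1}"] verts_SK5hat_B unfolding SK5hat_B_def by auto

lemma deg_SK5hat_A_ge_2: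
  assumes "v \<in> verts SK5hat_A"
  shows "2 \<le> deg SK5hat_A v"
proof -
  have "\<forall>v\<in>set glued_vertex_list. 2 \<le> length (filter (\<lambda>u. glued_adj {1, 2} u v) glued_vertex_list)"
    by (simp add: glued_vertex_list_def K5hat_edge_list_def)
  then show ?thesis
    using assms deg_eq_length_filter[OF verts_SK5hat_A distinct_glued_vertex_list adj_SK5hat_A]
    by (simp add: verts_SK5hat_A)
qed

lemma deg_SK5hat_B_glued_singleton: "deg SK5hat_B (Inl (P 0)) = 1"
  by (simp add: deg_eq_length_filter[OF verts_SK5hat_B distinct_glued_vertex_list adj_SK5hat_B]
      glued_vertex_list_def K5hat_edge_list_def)

lemma not_graph_iso_SK5hat_A_B: "\<not> graph_iso SK5hat_A SK5hat_B"
proof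
  assume "graph_iso SK5hat_A SK5hat_B"
  then obtain f where bij: "bij_betw f (verts SK5hat_A) (verts SK5hat_B)"
    and E: "\<forall>x\<in>verts SK5hat_A. \<forall>y\<in>verts SK5hat_A.
              {x, y} \<in> edges SK5hat_A \<longleftrightarrow> {f x, f y} \<in> edges SK5hat_B"
    unfolding graph_iso_def by blast
  have "Inl (P 0) \<in> f ` verts SK5hat_A"
    using bij by (simp add: bij_betw_def verts_SK5hat_B glued_vertex_list_def)
  then obtain x where x: "x \<in> verts SK5hat_A" and fx: "f x = Inl (P 0)" by (metis imageE)
  have "deg SK5hat_A x = 1"
    using deg_graph_iso[OF bij E x] fx deg_SK5hat_B_glued_singleton by simp
  with deg_SK5hat_A_ge_2[OF x] show False by simp
qed

definition walk_VE_A :: "real mat" where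
  "walk_VE_A = mat_of_rows_list 15
     [[1/5,1/5,1/5,1/5,0,0,0,0,0,0,1/5,0,0,0,0],
      [1/5,0,0,0,1/5,1/5,1/5,0,0,0,0,1/5,0,0,0],
      [0,1/5,0,0,1/5,0,0,1/5,1/5,0,0,0,1/5,0,0],
      [0,0,1/5,0,0,1/5,0,1/5,0,1/5,0,0,0,1/5,0],
      [0,0,0,1/5,0,0,1/5,0,1/5,1/5,0,0,0,0,1/5],
      [0,0,0,0,0,0,0,0,0,0,1/2,1/2,0,0,0],
      [0,0,0,0,0,0,0,0,0,0,0,0,1/3,1/3,1/3]]"

definition walk_EV_A :: "real mat" where
  "walk_EV_A = mat_of_rows_list 7
     [[1/2,1/2,0,0,0,0,0],
      [1/2,0,1/2,0,0,0,0],
      [1/2,0,0,1/2,0,0,0],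
      [1/2,0,0,0,1/2,0,0],
      [0,1/2,1/2,0,0,0,0],
      [0,1/2,0,1/2,0,0,0],
      [0,1/2,0,0,1/2,0,0],
      [0,0,1/2,1/2,0,0,0],
      [0,0,1/2,0,1/2,0,0],
      [0,0,0,1/2,1/2,0,0],
      [1/2,0,0,0,0,1/2,0],
      [0,1/2,0,0,0,1/2,0],
      [0,0,1/2,0,0,0,1/2],
      [0,0,0,1/2,0,0,1/2],
      [0,0,0,0,1/2,0,1/2]]"

definition two_step_walk_A :: "real mat" where
  "two_step_walk_A = mat_of_rows_list 7
     [[1/2,1/10,1/10,1/10,1/10,1/10,0],
      [1/10,1/2,1/10,1/10,1/10,1/10,0],
      [1/10,1/10,1/2,1/10,1/10,0,1/10],
      [1/10,1/10,1/10,1/2,1/10,0,1/10],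
      [1/10,1/10,1/10,1/10,1/2,0,1/10],
      [1/4,1/4,0,0,0,1/2,0],
      [0,0,1/6,1/6,1/6,0,1/2]]"

(* The first two columns span a plane on which the walk acts as normal_form_block, the third is
   the constant vector (the walk is stochastic) and the last four are eigenvectors for 2/5;
   likewise for B. *)

definition normal_form_basis_A :: "real mat" where
  "normal_form_basis_A = mat_of_rows_list 7
     [[-3/2,0,1,-1,0,0,-2/5],
      [-3/2,0,1,1,0,0,0],
      [1,0,1,0,-1,-1,-3/5],
      [1,0,1,0,1,0,0],
      [1,0,1,0,0,1,0],
      [0,-3/2,1,0,0,0,1],
      [0,1,1,0,0,0,1]]"

definition normal_form_basis_inv_A :: "real mat" where
  "normal_form_basis_inv_A = mat_of_rows_list 7
     [[-1/5,-1/5,2/15,2/15,2/15,0,0],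
      [0,0,0,0,0,-2/5,2/5],
      [1/6,1/6,1/6,1/6,1/6,1/15,1/10],
      [-7/15,8/15,1/30,1/30,1/30,-1/15,-1/10],
      [1/30,1/30,-3/10,7/10,-3/10,-1/15,-1/10],
      [1/30,1/30,-3/10,-3/10,7/10,-1/15,-1/10],
      [-1/6,-1/6,-1/6,-1/6,-1/6,1/3,1/2]]"

lemma op_mat_signless_SK5hat_A:
  "op_mat (signless_std_lap SK5hat_A) glued_vertex_list
     = four_block_mat (1\<^sub>m 7) walk_VE_A walk_EV_A (1\<^sub>m 15)"
  unfolding op_mat_signless_std_lap_as_rows[OF verts_SK5hat_A distinct_glued_vertex_list adj_SK5hat_A]
    length_glued_vertex_list one_mat_as_rows walk_VE_A_def walk_EV_A_def
  by (subst four_block_mat_of_rows_list, simp_all add: upt_rec,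
      simp add: glued_vertex_list_def K5hat_edge_list_def doubleton_eq_iff)

lemma walk_VE_EV_A: "walk_VE_A * walk_EV_A = two_step_walk_A"
  unfolding walk_VE_A_def walk_EV_A_def two_step_walk_A_def
  by (simp add: mat_of_rows_list_mult rows_mult_def upt_rec)

lemma two_step_walk_A_normal_form_basis:
  "two_step_walk_A * normal_form_basis_A = normal_form_basis_A * two_step_normal_form"
  unfolding two_step_walk_A_def normal_form_basis_A_def two_step_normal_form_def
  by (simp add: mat_of_rows_list_mult rows_mult_def upt_rec)

lemma normal_form_basis_inv_A: "normal_form_basis_inv_A * normal_form_basis_A = 1\<^sub>m 7"
  unfolding normal_form_basis_inv_A_def normal_form_basis_A_def one_mat_as_rows
  by (simp add: mat_of_rows_list_mult rows_mult_def upt_rec)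

lemma char_poly_two_step_walk_A: "char_poly two_step_walk_A = char_poly two_step_normal_form"
  by (rule char_poly_eq_if_intertwined[OF _ _ _ _
        two_step_walk_A_normal_form_basis normal_form_basis_inv_A])
    (simp_all add: two_step_walk_A_def two_step_normal_form_def normal_form_basis_A_def
      normal_form_basis_inv_A_def mat_of_rows_list_carrier)

definition walk_VE_B :: "real mat" where
  "walk_VE_B = mat_of_rows_list 15
     [[1/5,1/5,1/5,1/5,0,0,0,0,0,0,1/5,0,0,0,0],
      [1/5,0,0,0,1/5,1/5,1/5,0,0,0,0,1/5,0,0,0],
      [0,1/5,0,0,1/5,0,0,1/5,1/5,0,0,0,1/5,0,0],
      [0,0,1/5,0,0,1/5,0,1/5,0,1/5,0,0,0,1/5,0],
      [0,0,0,1/5,0,0,1/5,0,1/5,1/5,0,0,0,0,1/5],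
      [0,0,0,0,0,0,0,0,0,0,1,0,0,0,0],
      [0,0,0,0,0,0,0,0,0,0,0,1/4,1/4,1/4,1/4]]"

definition walk_EV_B :: "real mat" where
  "walk_EV_B = mat_of_rows_list 7
     [[1/2,1/2,0,0,0,0,0],
      [1/2,0,1/2,0,0,0,0],
      [1/2,0,0,1/2,0,0,0],
      [1/2,0,0,0,1/2,0,0],
      [0,1/2,1/2,0,0,0,0],
      [0,1/2,0,1/2,0,0,0],
      [0,1/2,0,0,1/2,0,0],
      [0,0,1/2,1/2,0,0,0],
      [0,0,1/2,0,1/2,0,0],
      [0,0,0,1/2,1/2,0,0],
      [1/2,0,0,0,0,1/2,0],
      [0,1/2,0,0,0,0,1/2],
      [0,0,1/2,0,0,0,1/2],
      [0,0,0,1/2,0,0,1/2],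
      [0,0,0,0,1/2,0,1/2]]"

definition two_step_walk_B :: "real mat" where
  "two_step_walk_B = mat_of_rows_list 7
     [[1/2,1/10,1/10,1/10,1/10,1/10,0],
      [1/10,1/2,1/10,1/10,1/10,0,1/10],
      [1/10,1/10,1/2,1/10,1/10,0,1/10],
      [1/10,1/10,1/10,1/2,1/10,0,1/10],
      [1/10,1/10,1/10,1/10,1/2,0,1/10],
      [1/2,0,0,0,0,1/2,0],
      [0,1/8,1/8,1/8,1/8,0,1/2]]"

definition normal_form_basis_B :: "real mat" where
  "normal_form_basis_B = mat_of_rows_list 7
     [[-4,0,1,0,0,0,-1/5],
      [1,0,1,-1,-1,-1,-4/5],
      [1,0,1,1,0,0,0],
      [1,0,1,0,1,0,0],
      [1,0,1,0,0,1,0],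
      [0,-4,1,0,0,0,1],
      [0,1,1,0,0,0,1]]"

definition normal_form_basis_inv_B :: "real mat" where
  "normal_form_basis_inv_B = mat_of_rows_list 7
     [[-1/5,1/20,1/20,1/20,1/20,0,0],
      [0,0,0,0,0,-1/5,1/5],
      [1/6,1/6,1/6,1/6,1/6,1/30,2/15],
      [1/30,-13/60,47/60,-13/60,-13/60,-1/30,-2/15],
      [1/30,-13/60,-13/60,47/60,-13/60,-1/30,-2/15],
      [1/30,-13/60,-13/60,-13/60,47/60,-1/30,-2/15],
      [-1/6,-1/6,-1/6,-1/6,-1/6,1/6,2/3]]"

lemma op_mat_signless_SK5hat_B:
  "op_mat (signless_std_lap SK5hat_B) glued_vertex_list
     = four_block_mat (1\<^sub>m 7) walk_VE_B walk_EV_B (1\<^sub>m 15)"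
  unfolding op_mat_signless_std_lap_as_rows[OF verts_SK5hat_B distinct_glued_vertex_list adj_SK5hat_B]
    length_glued_vertex_list one_mat_as_rows walk_VE_B_def walk_EV_B_def
  by (subst four_block_mat_of_rows_list, simp_all add: upt_rec,
      simp add: glued_vertex_list_def K5hat_edge_list_def doubleton_eq_iff)

lemma walk_VE_EV_B: "walk_VE_B * walk_EV_B = two_step_walk_B"
  unfolding walk_VE_B_def walk_EV_B_def two_step_walk_B_def
  by (simp add: mat_of_rows_list_mult rows_mult_def upt_rec)

lemma two_step_walk_B_normal_form_basis:
  "two_step_walk_B * normal_form_basis_B = normal_form_basis_B * two_step_normal_form"
  unfolding two_step_walk_B_def normal_form_basis_B_def two_step_normal_form_def
  by (simp add: mat_of_rows_list_mult rows_mult_def upt_rec)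

lemma normal_form_basis_inv_B: "normal_form_basis_inv_B * normal_form_basis_B = 1\<^sub>m 7"
  unfolding normal_form_basis_inv_B_def normal_form_basis_B_def one_mat_as_rows
  by (simp add: mat_of_rows_list_mult rows_mult_def upt_rec)

lemma char_poly_two_step_walk_B: "char_poly two_step_walk_B = char_poly two_step_normal_form"
  by (rule char_poly_eq_if_intertwined[OF _ _ _ _
        two_step_walk_B_normal_form_basis normal_form_basis_inv_B])
    (simp_all add: two_step_walk_B_def two_step_normal_form_def normal_form_basis_B_def
      normal_form_basis_inv_B_def mat_of_rows_list_carrier)

lemma char_poly_laplacians_eq_spec9:
  assumes signless: "op_mat (signless_std_lap G) glued_vertex_list = four_block_mat (1\<^sub>m 7) B C (1\<^sub>m 15)"
    and B: "B \<in> carrier_mat 7 15" and C: "C \<in> carrier_mat 15 7"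
    and BC: "char_poly (B * C) = char_poly two_step_normal_form"
  shows "char_poly (op_mat (signless_std_lap G) glued_vertex_list) = (\<Prod>l\<leftarrow>spec9. [:- l, 1:])"
    and "char_poly (op_mat (std_lap G) glued_vertex_list) = (\<Prod>l\<leftarrow>spec9. [:- l, 1:])"
proof -
  show signless_spec: "char_poly (op_mat (signless_std_lap G) glued_vertex_list) = (\<Prod>l\<leftarrow>spec9. [:- l, 1:])"
    unfolding signless char_poly_four_block_one[OF B C, of 8, simplified] BC
    by (rule char_poly_two_step_normal_form_spec9)
  show "char_poly (op_mat (std_lap G) glued_vertex_list) = (\<Prod>l\<leftarrow>spec9. [:- l, 1:])"
    using char_poly_std_lap_eq_signless[OF distinct_glued_vertex_list _ B C signless]
      length_glued_vertex_list signless_spec by simp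
qed

lemma char_poly_laplacians_SK5hat_A:
  "char_poly (op_mat (signless_std_lap SK5hat_A) glued_vertex_list) = (\<Prod>l\<leftarrow>spec9. [:- l, 1:])"
  "char_poly (op_mat (std_lap SK5hat_A) glued_vertex_list) = (\<Prod>l\<leftarrow>spec9. [:- l, 1:])"
proof -
  have "walk_VE_A \<in> carrier_mat 7 15" "walk_EV_A \<in> carrier_mat 15 7"
    by (simp_all add: walk_VE_A_def walk_EV_A_def mat_of_rows_list_carrier)
  then show "char_poly (op_mat (signless_std_lap SK5hat_A) glued_vertex_list) = (\<Prod>l\<leftarrow>spec9. [:- l, 1:])"
    "char_poly (op_mat (std_lap SK5hat_A) glued_vertex_list) = (\<Prod>l\<leftarrow>spec9. [:- l, 1:])"
    using char_poly_laplacians_eq_spec9[OF op_mat_signless_SK5hat_A]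
    by (simp_all add: walk_VE_EV_A char_poly_two_step_walk_A)
qed

lemma char_poly_laplacians_SK5hat_B:
  "char_poly (op_mat (signless_std_lap SK5hat_B) glued_vertex_list) = (\<Prod>l\<leftarrow>spec9. [:- l, 1:])"
  "char_poly (op_mat (std_lap SK5hat_B) glued_vertex_list) = (\<Prod>l\<leftarrow>spec9. [:- l, 1:])"
proof -
  have "walk_VE_B \<in> carrier_mat 7 15" "walk_EV_B \<in> carrier_mat 15 7"
    by (simp_all add: walk_VE_B_def walk_EV_B_def mat_of_rows_list_carrier)
  then show "char_poly (op_mat (signless_std_lap SK5hat_B) glued_vertex_list) = (\<Prod>l\<leftarrow>spec9. [:- l, 1:])"
    "char_poly (op_mat (std_lap SK5hat_B) glued_vertex_list) = (\<Prod>l\<leftarrow>spec9. [:- l, 1:])"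
    using char_poly_laplacians_eq_spec9[OF op_mat_signless_SK5hat_B]
    by (simp_all add: walk_VE_EV_B char_poly_two_step_walk_B)
qed

theorem mainTheorem9:
  shows "card (verts SK5hat_A) = 22 \<and> card (verts SK5hat_B) = 22
    \<and> \<not> graph_iso SK5hat_A SK5hat_B
    \<and> (\<forall>vs. enumerates SK5hat_A vs \<longrightarrow> has_spectrum (op_mat (std_lap SK5hat_A) vs) spec9)
    \<and> (\<forall>vs. enumerates SK5hat_B vs \<longrightarrow> has_spectrum (op_mat (std_lap SK5hat_B) vs) spec9)
    \<and> (\<forall>vs ws. enumerates SK5hat_A vs \<longrightarrow> enumerates SK5hat_B ws \<longrightarrow>
         char_poly (op_mat (signless_std_lap SK5hat_A) vs)
           = char_poly (op_mat (signless_std_lap SK5hat_B) ws))"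
proof (intro conjI allI impI)
  have "card (set glued_vertex_list) = 22"
    using distinct_card[OF distinct_glued_vertex_list] length_glued_vertex_list by simp
  then show "card (verts SK5hat_A) = 22" "card (verts SK5hat_B) = 22"
    by (simp_all only: verts_SK5hat_A verts_SK5hat_B)
  show "\<not> graph_iso SK5hat_A SK5hat_B" by (rule not_graph_iso_SK5hat_A_B)
next
  fix vs assume "enumerates SK5hat_A vs"
  then show "has_spectrum (op_mat (std_lap SK5hat_A) vs) spec9"
    unfolding has_spectrum_def
    using char_poly_op_mat_enumerates[OF _ enumerates_SK5hat_A] char_poly_laplacians_SK5hat_A(2)
    by metis
next
  fix vs assume "enumerates SK5hat_B vs"
  then show "has_spectrum (op_mat (std_lap SK5hat_B) vs) spec9"
    unfolding has_spectrum_def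
    using char_poly_op_mat_enumerates[OF _ enumerates_SK5hat_B] char_poly_laplacians_SK5hat_B(2)
    by metis
next
  fix vs ws assume "enumerates SK5hat_A vs" "enumerates SK5hat_B ws"
  then show "char_poly (op_mat (signless_std_lap SK5hat_A) vs)
      = char_poly (op_mat (signless_std_lap SK5hat_B) ws)"
    using char_poly_op_mat_enumerates enumerates_SK5hat_A enumerates_SK5hat_B
      char_poly_laplacians_SK5hat_A(1) char_poly_laplacians_SK5hat_B(1) by metis
qed

end
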